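(* Let $F=\{T_1,\dots,T_n\}$ be a finite family of reduction operators relative to a well-ordered set $(G,<)$ and let $\tilde F=\{\tilde T_1,\dots,\tilde T_n\}$ be the reduction of $F$. Then $\wedge\tilde F=\wedge F$ and $\mathrm{obs}(F)\subseteq\mathrm{obs}(\tilde F)$.
   Context: Let $\mathbb{K}$ be a field, $(G,<)$ a well-ordered set and $\mathbb{K}G$ the vector space with basis $G$. For $v\neq0$, $\mathrm{lt}(v)$ is the greatest element of $G$ appearing with nonzero coefficient in $v$. Extend $<$ to $\mathbb{K}G$: $u<v$ if $u=0$ and $v\neq0$, or if $\mathrm{lt}(u)<\mathrm{lt}(v)$; $u\le v$ means $u<v$ or $u=v$. A reduction operator is an idempotent linear endomorphism $T$ of $\mathbb{K}G$ with $T(g)\le g$ for all $g\in G$; $\mathrm{nf}(T)=\{g\in G\mid T(g)=g\}$, $\mathrm{red}(T)=G\setminus\mathrm{nf}(T)$. For every subspace $V$ there is a unique reduction operator $\ker^{-1}(V)$ with kernel $V$. For a set $F$ of reduction operators, $\wedge F=\ker^{-1}(\sum_{T\in F}\ker T)$, $\mathrm{nf}(F)=\bigcap_{T\in F}\mathrm{nf}(T)$ (which contains $\mathrm{nf}(\wedge F)$), and $\mathrm{obs}(F)=\mathrm{nf}(F)\setminus\mathrm{nf}(\wedge F)$. For $F=\{T_1,\dots,T_n\}$: $\mathbf{ker}(F)=\ker T_1\times\dots\times\ker T_n$, $\pi_F(v_1,\dots,v_n)=v_1+\dots+v_n$, $\mathrm{syz}(F)=\ker\pi_F$. For $g\in\mathrm{red}(T_i)$,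 $e_{i,g}$ is the tuple with $g-T_i(g)$ at position $i$ and $0$ elsewhere; these form a basis of $\mathbf{ker}(F)$, well-ordered by $e_{i,g}\sqsubset e_{i',g'}$ iff $i<i'$, or $i=i'$ and $g<g'$; $\mathrm{lt}(\mathrm{syz}(F))$ is the set of $\sqsubset$-greatest basis elements appearing in nonzero elements of $\mathrm{syz}(F)$. The reduction of $F$ is $\tilde F=\{\tilde T_1,\dots,\tilde T_n\}$ where $\tilde T_i$ is the linear map with $\tilde T_i(g)=g$ if $g\in\mathrm{red}(T_i)$ and $e_{i,g}\in\mathrm{lt}(\mathrm{syz}(F))$, and $\tilde T_i(g)=T_i(g)$ otherwise, for $g\in G$; each $\tilde T_i$ is a reduction operator. *)

theory Defs
  imports Main "HOL-Library.Poly_Mapping"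
begin

text \<open>The vector space KG with basis G is modelled as the finitely supported
  finitely supported maps G to K; the basis element g is Poly_Mapping.single g 1.
  (G,<) is a type of class wellorder, K a type of class field.\<close>

type_synonym ('g, 'k) vec = "'g \<Rightarrow>\<^sub>0 'k"

definition bvec :: "'g \<Rightarrow> ('g, 'k::field) vec" where
  "bvec g = Poly_Mapping.single g 1"

definition scal :: "'k::field \<Rightarrow> ('g, 'k) vec \<Rightarrow> ('g, 'k) vec" where
  "scal c v = Poly_Mapping.map (\<lambda>x. c * x) v"

definition lt :: "('g::wellorder, 'k::field) vec \<Rightarrow> 'g" where
  "lt v = Max (Poly_Mapping.keys v)"

definition vless :: "('g::wellorder, 'k::field) vec \<Rightarrow> ('g, 'k) vec \<Rightarrow> bool" where
  "vless u v \<longleftrightarrow> (u = 0 \<and> v \<noteq> 0) \<or> (u \<noteq> 0 \<and> v \<noteq> 0 \<and> lt u < lt v)"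

definition vle :: "('g::wellorder, 'k::field) vec \<Rightarrow> ('g, 'k) vec \<Rightarrow> bool" where
  "vle u v \<longleftrightarrow> vless u v \<or> u = v"

definition linear_op :: "(('g, 'k::field) vec \<Rightarrow> ('g, 'k) vec) \<Rightarrow> bool" where
  "linear_op T \<longleftrightarrow> (\<forall>u v. T (u + v) = T u + T v) \<and> (\<forall>c v. T (scal c v) = scal c (T v))"

definition reduction_op :: "(('g::wellorder, 'k::field) vec \<Rightarrow> ('g, 'k) vec) \<Rightarrow> bool" where
  "reduction_op T \<longleftrightarrow> linear_op T \<and> T \<circ> T = T \<and> (\<forall>g. vle (T (bvec g)) (bvec g))"

definition nf :: "(('g::wellorder, 'k::field) vec \<Rightarrow> ('g, 'k) vec) \<Rightarrow> 'g set" where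
  "nf T = {g. T (bvec g) = bvec g}"

definition red :: "(('g::wellorder, 'k::field) vec \<Rightarrow> ('g, 'k) vec) \<Rightarrow> 'g set" where
  "red T = UNIV - nf T"

definition kernel :: "(('g, 'k::field) vec \<Rightarrow> ('g, 'k) vec) \<Rightarrow> ('g, 'k) vec set" where
  "kernel T = {v. T v = 0}"

definition ker_inv :: "('g::wellorder, 'k::field) vec set \<Rightarrow> (('g, 'k) vec \<Rightarrow> ('g, 'k) vec)" where
  "ker_inv V = (THE T. reduction_op T \<and> kernel T = V)"

text \<open>A finite family F = {T_0, ..., T_(n-1)} is given as T :: nat \<Rightarrow> operator and n.\<close>
definition wedge :: "nat \<Rightarrow> (nat \<Rightarrow> ('g::wellorder, 'k::field) vec \<Rightarrow> ('g, 'k) vec)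
    \<Rightarrow> (('g, 'k) vec \<Rightarrow> ('g, 'k) vec)" where
  "wedge n T = ker_inv {v. \<exists>vs. (\<forall>i<n. vs i \<in> kernel (T i)) \<and> v = (\<Sum>i<n. vs i)}"

definition nfF :: "nat \<Rightarrow> (nat \<Rightarrow> ('g::wellorder, 'k::field) vec \<Rightarrow> ('g, 'k) vec) \<Rightarrow> 'g set" where
  "nfF n T = {g. \<forall>i<n. g \<in> nf (T i)}"

definition obs :: "nat \<Rightarrow> (nat \<Rightarrow> ('g::wellorder, 'k::field) vec \<Rightarrow> ('g, 'k) vec) \<Rightarrow> 'g set" where
  "obs n T = nfF n T - nf (wedge n T)"

text \<open>Tuples (v_0,...,v_(n-1)) are functions nat \<Rightarrow> vec, zero outside {..<n}.\<close>
definition kerF :: "nat \<Rightarrow> (nat \<Rightarrow> ('g::wellorder, 'k::field) vec \<Rightarrow> ('g, 'k) vec)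
    \<Rightarrow> (nat \<Rightarrow> ('g, 'k) vec) set" where
  "kerF n T = {s. (\<forall>i<n. s i \<in> kernel (T i)) \<and> (\<forall>i\<ge>n. s i = 0)}"

definition piF :: "nat \<Rightarrow> (nat \<Rightarrow> ('g, 'k::field) vec) \<Rightarrow> ('g, 'k) vec" where
  "piF n s = (\<Sum>i<n. s i)"

definition syz :: "nat \<Rightarrow> (nat \<Rightarrow> ('g::wellorder, 'k::field) vec \<Rightarrow> ('g, 'k) vec)
    \<Rightarrow> (nat \<Rightarrow> ('g, 'k) vec) set" where
  "syz n T = {s \<in> kerF n T. piF n s = 0}"

definition e_basis :: "(nat \<Rightarrow> ('g::wellorder, 'k::field) vec \<Rightarrow> ('g, 'k) vec)
    \<Rightarrow> nat \<Rightarrow> 'g \<Rightarrow> (nat \<Rightarrow> ('g, 'k) vec)" where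
  "e_basis T i g = (\<lambda>j. if j = i then bvec g - T i (bvec g) else 0)"

definition comb :: "(nat \<Rightarrow> ('g::wellorder, 'k::field) vec \<Rightarrow> ('g, 'k) vec)
    \<Rightarrow> (nat \<times> 'g \<Rightarrow>\<^sub>0 'k) \<Rightarrow> (nat \<Rightarrow> ('g, 'k) vec)" where
  "comb T c = (\<lambda>j. \<Sum>p\<in>Poly_Mapping.keys c. scal (Poly_Mapping.lookup c p) (e_basis T (fst p) (snd p) j))"

definition sqlt :: "nat \<times> 'g::wellorder \<Rightarrow> nat \<times> 'g \<Rightarrow> bool" where
  "sqlt p q \<longleftrightarrow> fst p < fst q \<or> (fst p = fst q \<and> snd p < snd q)"

text \<open>lt(syz F): the \<sqsubset>-greatest basis elements appearing (with nonzero
  coefficient in the basis expansion) in nonzero elements of syz F.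
  Elements are indexed by their pair (i,g).\<close>
definition lt_syz :: "nat \<Rightarrow> (nat \<Rightarrow> ('g::wellorder, 'k::field) vec \<Rightarrow> ('g, 'k) vec)
    \<Rightarrow> (nat \<times> 'g) set" where
  "lt_syz n T = {(i, g). \<exists>c.
      (\<forall>p\<in>Poly_Mapping.keys c. fst p < n \<and> snd p \<in> red (T (fst p))) \<and>
      comb T c \<in> syz n T \<and> comb T c \<noteq> (\<lambda>_. 0) \<and>
      (i, g) \<in> Poly_Mapping.keys c \<and> (\<forall>q\<in>Poly_Mapping.keys c. q = (i, g) \<or> sqlt q (i, g))}"

definition lin_ext :: "('g \<Rightarrow> ('g, 'k::field) vec) \<Rightarrow> ('g, 'k) vec \<Rightarrow> ('g, 'k) vec" where
  "lin_ext f v = (\<Sum>g\<in>Poly_Mapping.keys v. scal (Poly_Mapping.lookup v g) (f g))"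

definition reduce :: "nat \<Rightarrow> (nat \<Rightarrow> ('g::wellorder, 'k::field) vec \<Rightarrow> ('g, 'k) vec)
    \<Rightarrow> (nat \<Rightarrow> ('g, 'k) vec \<Rightarrow> ('g, 'k) vec)" where
  "reduce n T = (\<lambda>i. lin_ext (\<lambda>g. if g \<in> red (T i) \<and> (i, g) \<in> lt_syz n T
                                   then bvec g else T i (bvec g)))"

end

theory Submission
  imports Defs "HOL-Library.Product_Lexorder"
begin

text \<open>
  Write \<open>x(i,g) = g - T\<^sub>i(g)\<close> and \<open>R\<^sub>i\<close> for the reduction of \<open>T\<^sub>i\<close>. The kernel of a reduction
  operator \<open>T\<^sub>i\<close> is spanned by the \<open>x(i,g)\<close>, so \<open>\<Sum>\<^sub>i ker T\<^sub>i\<close> is spanned by all of them.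
  Since \<open>T\<^sub>i \<circ> R\<^sub>i = T\<^sub>i\<close>, we get \<open>ker R\<^sub>i \<subseteq> ker T\<^sub>i\<close>; and normal forms of \<open>T\<^sub>i\<close> stay normal
  forms of \<open>R\<^sub>i\<close>, which gives the inclusion of obstructions once the wedges agree.
  Conversely, \<open>x(i,g) \<in> \<Sum>\<^sub>i ker R\<^sub>i\<close> by well-founded induction along \<open>\<sqsubset>\<close>: if \<open>e(i,g)\<close> is not
  the leading term of a syzygy, then \<open>R\<^sub>i(g) = T\<^sub>i(g)\<close>, which \<open>R\<^sub>i\<close> fixes, so \<open>x(i,g) \<in> ker R\<^sub>i\<close>;
  if it is, the syzygy expresses \<open>x(i,g)\<close> through \<open>\<sqsubset>\<close>-smaller generators.
\<close>

lemma lookup_scal [simp]: "Poly_Mapping.lookup (scal c v) k = c * Poly_Mapping.lookup v k"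
  unfolding scal_def by (simp add: Poly_Mapping.map.rep_eq when_def)

lemma scal_add_right: "scal c (u + v) = scal c u + scal c v"
  by (rule poly_mapping_eqI) (simp add: lookup_add algebra_simps)

lemma scal_add_left: "scal (a + b) v = scal a v + scal b v"
  by (rule poly_mapping_eqI) (simp add: lookup_add algebra_simps)

lemma scal_diff_right: "scal c (u - v) = scal c u - scal c v"
  by (rule poly_mapping_eqI) (simp add: lookup_minus algebra_simps)

lemma scal_scal: "scal a (scal b v) = scal (a * b) v"
  by (rule poly_mapping_eqI) simp

lemma scal_zero_right [simp]: "scal c 0 = 0"
  by (rule poly_mapping_eqI) simp

lemma scal_one [simp]: "scal 1 v = v"
  by (rule poly_mapping_eqI) simp

lemma scal_minus_one: "scal (- 1) v = - v"
  by (rule poly_mapping_eqI) simp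

lemma scal_sum_right: "scal c (sum f A) = (\<Sum>x\<in>A. scal c (f x))"
  by (induction A rule: infinite_finite_induct) (auto simp: scal_add_right intro: poly_mapping_eqI)

lemma keys_scal_subset: "Poly_Mapping.keys (scal c v) \<subseteq> Poly_Mapping.keys v"
  by (auto simp: in_keys_iff)

lemma lookup_bvec: "Poly_Mapping.lookup (bvec g) k = (if g = k then 1 else 0)"
  by (simp add: bvec_def lookup_single when_def)

lemma lin_ext_eq_sum_superset:
  assumes "finite S" "Poly_Mapping.keys v \<subseteq> S"
  shows "lin_ext f v = (\<Sum>g\<in>S. scal (Poly_Mapping.lookup v g) (f g))"
  unfolding lin_ext_def
  by (rule sum.mono_neutral_left) (use assms in \<open>auto simp: in_keys_iff intro: poly_mapping_eqI\<close>)

lemma lin_ext_bvec [simp]: "lin_ext f (bvec g) = f g"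
  by (simp add: lin_ext_def bvec_def lookup_bvec)

lemma lin_ext_add: "lin_ext f (u + v) = lin_ext f u + lin_ext f v"
proof -
  let ?S = "Poly_Mapping.keys u \<union> Poly_Mapping.keys v"
  have "lin_ext f (u + v) = (\<Sum>g\<in>?S. scal (Poly_Mapping.lookup (u + v) g) (f g))"
    using keys_add[of u v] by (intro lin_ext_eq_sum_superset) auto
  also have "\<dots> = (\<Sum>g\<in>?S. scal (Poly_Mapping.lookup u g) (f g))
                 + (\<Sum>g\<in>?S. scal (Poly_Mapping.lookup v g) (f g))"
    by (simp add: lookup_add scal_add_left sum.distrib)
  also have "\<dots> = lin_ext f u + lin_ext f v"
    by (simp add: lin_ext_eq_sum_superset[of ?S u] lin_ext_eq_sum_superset[of ?S v])
  finally show ?thesis .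
qed

lemma lin_ext_scal: "lin_ext f (scal c v) = scal c (lin_ext f v)"
proof -
  have "lin_ext f (scal c v)
      = (\<Sum>g\<in>Poly_Mapping.keys v. scal (Poly_Mapping.lookup (scal c v) g) (f g))"
    using keys_scal_subset[of c v] by (intro lin_ext_eq_sum_superset) auto
  then show ?thesis by (simp add: lin_ext_def scal_sum_right scal_scal)
qed

lemma linear_lin_ext: "linear_op (lin_ext f)"
  by (simp add: linear_op_def lin_ext_add lin_ext_scal)

lemma lin_ext_bvec_eq: "lin_ext bvec v = v"
proof (rule poly_mapping_eqI)
  fix k
  have "Poly_Mapping.lookup (lin_ext bvec v) k
      = (\<Sum>g\<in>Poly_Mapping.keys v. Poly_Mapping.lookup v g * (if g = k then 1 else 0))"
    by (simp add: lin_ext_def lookup_sum lookup_bvec)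
  also have "\<dots> = Poly_Mapping.lookup v k"
    by (simp add: in_keys_iff if_distrib cong: if_cong)
  finally show "Poly_Mapping.lookup (lin_ext bvec v) k = Poly_Mapping.lookup v k" .
qed

lemma lin_ext_diff: "lin_ext (\<lambda>g. f g - h g) v = lin_ext f v - lin_ext h v"
  by (simp add: lin_ext_def scal_diff_right sum_subtractf)

lemma linear_op_zero: "linear_op L \<Longrightarrow> L 0 = 0"
  unfolding linear_op_def by (metis add_cancel_right_right add_0)

lemma linear_op_add: "linear_op L \<Longrightarrow> L (u + v) = L u + L v"
  by (simp add: linear_op_def)

lemma linear_op_scal: "linear_op L \<Longrightarrow> L (scal c v) = scal c (L v)"
  by (simp add: linear_op_def)

lemma linear_op_diff: "linear_op L \<Longrightarrow> L (u - v) = L u - L v"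
  using linear_op_add[of L u "- v"] linear_op_scal[of L "- 1" v] by (simp add: scal_minus_one)

lemma linear_op_sum: "linear_op L \<Longrightarrow> L (sum f A) = (\<Sum>x\<in>A. L (f x))"
  by (induction A rule: infinite_finite_induct) (auto simp: linear_op_zero linear_op_add)

lemma linear_op_lin_ext: "linear_op L \<Longrightarrow> L (lin_ext f v) = lin_ext (\<lambda>g. L (f g)) v"
  by (simp add: lin_ext_def linear_op_sum linear_op_scal)

lemma linear_op_eq_lin_ext: "linear_op L \<Longrightarrow> L v = lin_ext (\<lambda>g. L (bvec g)) v"
  by (metis lin_ext_bvec_eq linear_op_lin_ext)

text \<open>Otherwise the greatest reducible \<open>g\<close> occurring in \<open>v\<close> would disappear from \<open>L v\<close>,
  since \<open>L\<close> maps every reducible \<open>g'\<close> strictly below \<open>g'\<close>.\<close>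

lemma reduction_op_fixed_point_keys:
  assumes L: "reduction_op L" and fixed: "L v = v"
  shows "Poly_Mapping.keys v \<subseteq> nf L"
proof (rule ccontr)
  let ?R = "Poly_Mapping.keys v \<inter> red L"
  assume "\<not> Poly_Mapping.keys v \<subseteq> nf L"
  then have "?R \<noteq> {}" by (auto simp: red_def)
  define h where "h = Max ?R"
  have h: "h \<in> ?R" and h_max: "\<And>g. g \<in> ?R \<Longrightarrow> g \<le> h"
    using Max_in[of ?R] Max_ge[of ?R] \<open>?R \<noteq> {}\<close> by (simp_all add: h_def)
  have lin: "linear_op L" using L by (simp add: reduction_op_def)
  have vanish: "Poly_Mapping.lookup (L (bvec g)) h = 0" if g: "g \<in> Poly_Mapping.keys v" for g
  proof (cases "g \<in> nf L")
    case True
    then show ?thesis using h by (auto simp: nf_def red_def lookup_bvec)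
  next
    case False
    have "g \<le> h" using h_max g False by (simp add: red_def)
    have "vle (L (bvec g)) (bvec g)" using L by (simp add: reduction_op_def)
    with False have "L (bvec g) = 0 \<or> lt (L (bvec g)) < g"
      by (auto simp: vle_def vless_def lt_def nf_def bvec_def)
    then show ?thesis
    proof (elim disjE)
      assume "lt (L (bvec g)) < g"
      with \<open>g \<le> h\<close> have "h \<notin> Poly_Mapping.keys (L (bvec g))"
        unfolding lt_def using Max_ge[OF finite_keys, of h] leD order_le_less_trans by blast
      then show ?thesis by (simp add: in_keys_iff)
    qed simp
  qed
  have "Poly_Mapping.lookup v h = Poly_Mapping.lookup (L v) h" using fixed by simp
  also have "\<dots> = (\<Sum>g\<in>Poly_Mapping.keys v.
                    Poly_Mapping.lookup v g * Poly_Mapping.lookup (L (bvec g)) h)"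
    by (subst linear_op_eq_lin_ext[OF lin]) (simp add: lin_ext_def lookup_sum)
  also have "\<dots> = 0" using vanish by simp
  finally show False using h by (simp add: in_keys_iff)
qed

definition kernel_sum :: "nat \<Rightarrow> (nat \<Rightarrow> ('g::wellorder, 'k::field) vec \<Rightarrow> ('g, 'k) vec)
    \<Rightarrow> ('g, 'k) vec set" where
  "kernel_sum n U = {v. \<exists>vs. (\<forall>i<n. vs i \<in> kernel (U i)) \<and> v = (\<Sum>i<n. vs i)}"

lemma wedge_eq_ker_inv_kernel_sum: "wedge n U = ker_inv (kernel_sum n U)"
  by (simp add: wedge_def kernel_sum_def)

context
  fixes n :: nat and U :: "nat \<Rightarrow> ('g::wellorder, 'k::field) vec \<Rightarrow> ('g, 'k) vec"
  assumes linear_U: "\<forall>i<n. linear_op (U i)"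
begin

lemma kernel_sum_zero: "0 \<in> kernel_sum n U"
  unfolding kernel_sum_def kernel_def
  by (rule CollectI, rule exI[of _ "\<lambda>_. 0"]) (simp add: linear_U linear_op_zero)

lemma kernel_sum_add:
  assumes "u \<in> kernel_sum n U" "v \<in> kernel_sum n U"
  shows "u + v \<in> kernel_sum n U"
proof -
  obtain us vs where "\<forall>i<n. U i (us i) = 0" "u = (\<Sum>i<n. us i)"
    and "\<forall>i<n. U i (vs i) = 0" "v = (\<Sum>i<n. vs i)"
    using assms unfolding kernel_sum_def kernel_def by blast
  then show ?thesis
    unfolding kernel_sum_def kernel_def
    by (intro CollectI exI[of _ "\<lambda>i. us i + vs i"]) (simp add: linear_U linear_op_add sum.distrib)
qed

lemma kernel_sum_scal:
  assumes "v \<in> kernel_sum n U"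
  shows "scal c v \<in> kernel_sum n U"
proof -
  obtain vs where "\<forall>i<n. U i (vs i) = 0" "v = (\<Sum>i<n. vs i)"
    using assms unfolding kernel_sum_def kernel_def by blast
  then show ?thesis
    unfolding kernel_sum_def kernel_def
    by (intro CollectI exI[of _ "\<lambda>i. scal c (vs i)"]) (simp add: linear_U linear_op_scal scal_sum_right)
qed

lemma kernel_sum_sum: "(\<And>x. x \<in> A \<Longrightarrow> f x \<in> kernel_sum n U) \<Longrightarrow> sum f A \<in> kernel_sum n U"
  by (induction A rule: infinite_finite_induct) (auto simp: kernel_sum_zero kernel_sum_add)

lemma kernel_subset_kernel_sum: "i < n \<Longrightarrow> kernel (U i) \<subseteq> kernel_sum n U"
proof
  fix v assume "i < n" "v \<in> kernel (U i)"
  then show "v \<in> kernel_sum n U"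
    unfolding kernel_sum_def
    by (intro CollectI exI[of _ "\<lambda>j. if j = i then v else 0"])
       (auto simp: kernel_def linear_U linear_op_zero)
qed

lemma lin_ext_in_kernel_sum: "(\<And>g. f g \<in> kernel_sum n U) \<Longrightarrow> lin_ext f v \<in> kernel_sum n U"
  unfolding lin_ext_def by (intro kernel_sum_sum kernel_sum_scal)

end

subsection \<open>The generators \<open>g - T\<^sub>i(g)\<close> of the kernels\<close>

definition ker_gen :: "(nat \<Rightarrow> ('g::wellorder, 'k::field) vec \<Rightarrow> ('g, 'k) vec) \<Rightarrow> nat \<Rightarrow> 'g
    \<Rightarrow> ('g, 'k) vec" where
  "ker_gen T i g = bvec g - T i (bvec g)"

lemma kernel_eq_lin_ext_ker_gen:
  assumes "linear_op (T i)" "v \<in> kernel (T i)"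
  shows "v = lin_ext (ker_gen T i) v"
proof -
  have "v = v - T i v" using assms(2) by (simp add: kernel_def)
  also have "\<dots> = lin_ext bvec v - lin_ext (\<lambda>g. T i (bvec g)) v"
    by (subst linear_op_eq_lin_ext[OF assms(1)]) (simp add: lin_ext_bvec_eq)
  also have "\<dots> = lin_ext (ker_gen T i) v"
    unfolding ker_gen_def by (rule lin_ext_diff[symmetric])
  finally show ?thesis .
qed

lemma piF_comb:
  assumes "\<forall>p\<in>Poly_Mapping.keys c. fst p < n"
  shows "piF n (comb T c)
    = (\<Sum>p\<in>Poly_Mapping.keys c. scal (Poly_Mapping.lookup c p) (ker_gen T (fst p) (snd p)))"
proof -
  have "piF n (comb T c) = (\<Sum>p\<in>Poly_Mapping.keys c.
          \<Sum>j<n. scal (Poly_Mapping.lookup c p) (e_basis T (fst p) (snd p) j))"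
    unfolding piF_def comb_def by (rule sum.swap)
  also have "\<dots> = (\<Sum>p\<in>Poly_Mapping.keys c.
          \<Sum>j<n. if j = fst p then scal (Poly_Mapping.lookup c p) (ker_gen T (fst p) (snd p)) else 0)"
    by (intro sum.cong refl) (auto simp: e_basis_def ker_gen_def intro: poly_mapping_eqI)
  also have "\<dots> = (\<Sum>p\<in>Poly_Mapping.keys c. scal (Poly_Mapping.lookup c p) (ker_gen T (fst p) (snd p)))"
    using assms by (intro sum.cong refl) simp
  finally show ?thesis .
qed

lemma sqlt_iff_less: "sqlt p q \<longleftrightarrow> p < q"
  by (auto simp: sqlt_def less_prod_def')

lemma ker_gen_lt_syz_in_kernel_sum:
  assumes linear_U: "\<forall>i<n. linear_op (U i)" and lead: "(i, g) \<in> lt_syz n T"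
    and smaller: "\<And>j h. (j, h) < (i, g) \<Longrightarrow> j < n \<Longrightarrow> ker_gen T j h \<in> kernel_sum n U"
  shows "ker_gen T i g \<in> kernel_sum n U"
proof -
  obtain c where
    c_keys: "\<forall>p\<in>Poly_Mapping.keys c. fst p < n" and
    c_syz: "comb T c \<in> syz n T" and
    c_lead: "(i, g) \<in> Poly_Mapping.keys c" and
    c_below: "\<forall>q\<in>Poly_Mapping.keys c. q = (i, g) \<or> q < (i, g)"
    using lead unfolding lt_syz_def sqlt_iff_less by blast
  define x where "x p = scal (Poly_Mapping.lookup c p) (ker_gen T (fst p) (snd p))" for p
  define a where "a = Poly_Mapping.lookup c (i, g)"
  have "a \<noteq> 0" using c_lead by (simp add: a_def in_keys_iff)
  have "x p \<in> kernel_sum n U" if "p \<in> Poly_Mapping.keys c - {(i, g)}" for p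
  proof -
    have "p < (i, g)" "fst p < n" using that c_below c_keys by auto
    then show ?thesis
      unfolding x_def using smaller[of "fst p" "snd p"] by (intro kernel_sum_scal[OF linear_U]) simp
  qed
  then have rest: "scal (- 1) (\<Sum>p\<in>Poly_Mapping.keys c - {(i, g)}. x p) \<in> kernel_sum n U"
    by (intro kernel_sum_scal[OF linear_U] kernel_sum_sum[OF linear_U])
  have "x (i, g) + (\<Sum>p\<in>Poly_Mapping.keys c - {(i, g)}. x p) = piF n (comb T c)"
    using c_lead by (simp add: piF_comb[OF c_keys] x_def sum.remove)
  also have "\<dots> = 0" using c_syz by (simp add: syz_def)
  finally have "scal a (ker_gen T i g) = scal (- 1) (\<Sum>p\<in>Poly_Mapping.keys c - {(i, g)}. x p)"
    by (simp add: x_def a_def scal_minus_one eq_neg_iff_add_eq_0)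
  with rest have "scal (inverse a) (scal a (ker_gen T i g)) \<in> kernel_sum n U"
    by (simp add: kernel_sum_scal[OF linear_U])
  with \<open>a \<noteq> 0\<close> show ?thesis by (simp add: scal_scal)
qed

subsection \<open>The reduction of a family\<close>

lemma nf_subset_nf_reduce: "nf (T i) \<subseteq> nf (reduce n T i)"
  by (auto simp: nf_def reduce_def red_def)

context
  fixes n :: nat and T :: "nat \<Rightarrow> ('g::wellorder, 'k::field) vec \<Rightarrow> ('g, 'k) vec"
  assumes reduction_T: "\<forall>i<n. reduction_op (T i)"
begin

lemma linear_T: "i < n \<Longrightarrow> linear_op (T i)"
  using reduction_T by (simp add: reduction_op_def)

lemma idempotent_T: "i < n \<Longrightarrow> T i (T i v) = T i v"
  using reduction_T by (auto simp: reduction_op_def fun_eq_iff)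

lemma linear_reduce: "linear_op (reduce n T i)"
  by (simp add: reduce_def linear_lin_ext)

lemma T_reduce:
  assumes "i < n"
  shows "T i (reduce n T i v) = T i v"
proof -
  have "T i (reduce n T i v)
      = lin_ext (\<lambda>g. T i (if g \<in> red (T i) \<and> (i, g) \<in> lt_syz n T then bvec g else T i (bvec g))) v"
    by (simp add: reduce_def linear_op_lin_ext[OF linear_T[OF assms]])
  also have "\<dots> = lin_ext (\<lambda>g. T i (bvec g)) v"
    by (intro arg_cong[where f="\<lambda>f. lin_ext f v"] ext) (simp add: idempotent_T[OF assms])
  also have "\<dots> = T i v"
    by (rule linear_op_eq_lin_ext[OF linear_T[OF assms], symmetric])
  finally show ?thesis .
qed

lemma kernel_reduce_subset:
  assumes "i < n"
  shows "kernel (reduce n T i) \<subseteq> kernel (T i)"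
proof
  fix v assume "v \<in> kernel (reduce n T i)"
  then have "T i v = T i 0" using T_reduce[OF assms, of v] by (simp add: kernel_def)
  then show "v \<in> kernel (T i)" by (simp add: kernel_def linear_op_zero[OF linear_T[OF assms]])
qed

lemma reduce_fixes_image: "i < n \<Longrightarrow> reduce n T i (T i (bvec g)) = T i (bvec g)"
proof -
  assume "i < n"
  then have "Poly_Mapping.keys (T i (bvec g)) \<subseteq> nf (T i)"
    using reduction_T idempotent_T by (intro reduction_op_fixed_point_keys) auto
  then have "reduce n T i (T i (bvec g)) = lin_ext bvec (T i (bvec g))"
    unfolding reduce_def lin_ext_def by (intro sum.cong) (auto simp: red_def nf_def)
  then show ?thesis by (simp add: lin_ext_bvec_eq)
qed

lemma ker_gen_in_kernel_sum_reduce: "i < n \<Longrightarrow> ker_gen T i g \<in> kernel_sum n (reduce n T)"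
proof (induction "(i, g)" arbitrary: i g rule: less_induct)
  case less
  have linear_U: "\<forall>i<n. linear_op (reduce n T i)" using linear_reduce by blast
  consider "g \<in> nf (T i)" | "g \<in> red (T i)" "(i, g) \<notin> lt_syz n T" | "(i, g) \<in> lt_syz n T"
    by (auto simp: red_def)
  then show ?case
  proof cases
    case 1
    then show ?thesis by (simp add: ker_gen_def nf_def kernel_sum_zero[OF linear_U])
  next
    case 2
    then have "reduce n T i (bvec g) = T i (bvec g)" by (simp add: reduce_def)
    with \<open>i < n\<close> have "ker_gen T i g \<in> kernel (reduce n T i)"
      by (simp add: kernel_def ker_gen_def linear_op_diff[OF linear_reduce] reduce_fixes_image)
    then show ?thesis using kernel_subset_kernel_sum[OF linear_U \<open>i < n\<close>] by blast
  next
    case 3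
    then show ?thesis using less.hyps by (rule ker_gen_lt_syz_in_kernel_sum[OF linear_U])
  qed
qed

lemma kernel_sum_reduce: "kernel_sum n (reduce n T) = kernel_sum n T"
proof
  show "kernel_sum n (reduce n T) \<subseteq> kernel_sum n T"
    unfolding kernel_sum_def using kernel_reduce_subset by blast
next
  have linear_U: "\<forall>i<n. linear_op (reduce n T i)" using linear_reduce by blast
  have kernel_in: "v \<in> kernel_sum n (reduce n T)" if "i < n" "v \<in> kernel (T i)" for i v
  proof -
    have "v = lin_ext (ker_gen T i) v"
      using that by (intro kernel_eq_lin_ext_ker_gen linear_T)
    also have "\<dots> \<in> kernel_sum n (reduce n T)"
      using ker_gen_in_kernel_sum_reduce[OF \<open>i < n\<close>] by (rule lin_ext_in_kernel_sum[OF linear_U])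
    finally show ?thesis .
  qed
  show "kernel_sum n T \<subseteq> kernel_sum n (reduce n T)"
  proof
    fix v assume "v \<in> kernel_sum n T"
    then obtain vs where vs: "\<forall>i<n. vs i \<in> kernel (T i)" and v: "v = (\<Sum>i<n. vs i)"
      unfolding kernel_sum_def by blast
    show "v \<in> kernel_sum n (reduce n T)"
      unfolding v by (rule kernel_sum_sum[OF linear_U]) (use vs kernel_in in blast)
  qed
qed

end

theorem mainTheorem7:
  fixes n :: nat
    and T :: "nat \<Rightarrow> ('g::wellorder, 'k::field) vec \<Rightarrow> ('g, 'k) vec"
  assumes "\<forall>i<n. reduction_op (T i)"
  shows "wedge n (reduce n T) = wedge n T \<and> obs n T \<subseteq> obs n (reduce n T)"
proof -
  have wedge_eq: "wedge n (reduce n T) = wedge n T"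
    by (simp add: wedge_eq_ker_inv_kernel_sum kernel_sum_reduce[OF assms])
  have "nfF n T \<subseteq> nfF n (reduce n T)"
    using nf_subset_nf_reduce unfolding nfF_def by blast
  then show ?thesis unfolding obs_def wedge_eq by blast
qed

end
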